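(* Let $(X,<)$ be a Banach lattice with lattice norm $\|\cdot\|$, and let $\mathcal{R}$ be the almost summability on $\mathcal{D}_{\mathcal{R}}\subset X^{\mathbb{N}}$. Then $\mathcal{R}$ preserves order-inequalities.
   Context: A sequence $(x_k)$ in $X$ is almost convergent to $L\in X$ if $\frac{1}{m+1}\sum_{i=0}^m x_{n+i}\to L$ in norm as $m\to\infty$, uniformly in $n$; the almost summability $\mathcal{R}$ has as domain $\mathcal{D}_{\mathcal{R}}$ the almost convergent sequences and assigns their almost limit; write $x_n\overset{\mathcal{R}}{\longrightarrow}L$. For $u\in X$, $|u|=u\vee(-u)$. $\mathcal{R}$ preserves order-inequalities if: whenever $(w_n),(x_n),(y_n),(z_n)\in\mathcal{D}_{\mathcal{R}}$, $w,x,y,z\in X$ and $C>0$ satisfy, for all $n$, $-C[(x_n-x)+(y_n-y)+(z_n-z)]<w_n-w<C[(x_n-x)+(y_n-y)+(z_n-z)]$ in the lattice order, and $x_n\overset{\mathcal{R}}{\longrightarrow}x$, $y_n\overset{\mathcal{R}}{\longrightarrow}y$, $z_n\overset{\mathcal{R}}{\longrightarrow}z$, then $w_n\overset{\mathcal{R}}{\longrightarrow}w$. *)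

theory Defs
  imports "HOL-Analysis.Analysis"
begin

text \<open>Banach lattice: a real Banach space which is a vector lattice (the order is
  translation invariant and invariant under multiplication by nonnegative scalars,
  and any two elements have a supremum and an infimum), whose norm is a lattice norm:
  \<open>|x| \<le> |y|\<close> implies \<open>norm x \<le> norm y\<close>, where \<open>|u| = u \<squnion> (-u)\<close>.\<close>

class banach_lattice = banach + ordered_real_vector + lattice +
  assumes lattice_norm: "sup x (- x) \<le> sup y (- y) \<Longrightarrow> norm x \<le> norm y"

definition almost_converges_to :: "(nat \<Rightarrow> 'a::real_normed_vector) \<Rightarrow> 'a \<Rightarrow> bool" where
  "almost_converges_to x L \<longleftrightarrow>
     (\<forall>e>0. \<exists>M. \<forall>m\<ge>M. \<forall>n. norm ((1 / (real m + 1)) *\<^sub>R (\<Sum>i\<le>m. x (n + i)) - L) < e)"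

definition almost_summability_domain :: "(nat \<Rightarrow> 'a::real_normed_vector) set" where
  "almost_summability_domain = {x. \<exists>L. almost_converges_to x L}"

definition almost_summability_preserves_order_inequalities :: "'a::banach_lattice itself \<Rightarrow> bool" where
  "almost_summability_preserves_order_inequalities _ \<longleftrightarrow>
     (\<forall>(ws::nat \<Rightarrow> 'a) xs ys zs w x y z C.
        ws \<in> almost_summability_domain \<and> xs \<in> almost_summability_domain \<and>
        ys \<in> almost_summability_domain \<and> zs \<in> almost_summability_domain \<and>
        C > 0 \<and>
        (\<forall>n. - (C *\<^sub>R ((xs n - x) + (ys n - y) + (zs n - z))) < ws n - w \<and>
             ws n - w < C *\<^sub>R ((xs n - x) + (ys n - y) + (zs n - z))) \<and>
        almost_converges_to xs x \<and> almost_converges_to ys y \<and> almost_converges_to zs z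
        \<longrightarrow> almost_converges_to ws w)"

end

theory Submission
  imports Defs
begin

text \<open>Almost convergence is uniform convergence of the Cesaro means, which are linear and
  monotone in the sequence. Hence the right-hand bound
  \<open>C ((x\<^sub>n - x) + (y\<^sub>n - y) + (z\<^sub>n - z))\<close> almost converges to \<open>0\<close>, the Cesaro means of
  \<open>w\<^sub>n - w\<close> are squeezed between the negative and the positive of its Cesaro means, and
  the lattice norm turns this order bound into a norm bound.\<close>

definition cesaro_mean :: "(nat \<Rightarrow> 'a::real_normed_vector) \<Rightarrow> nat \<Rightarrow> nat \<Rightarrow> 'a" where
  "cesaro_mean x m n = (1 / (real m + 1)) *\<^sub>R (\<Sum>i\<le>m. x (n + i))"

lemma almost_converges_to_iff_uniform_limit:
  "almost_converges_to x L \<longleftrightarrow> uniform_limit UNIV (cesaro_mean x) (\<lambda>_. L) sequentially"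
  by (simp add: almost_converges_to_def cesaro_mean_def uniform_limit_sequentially_iff dist_norm)

lemma cesaro_mean_add: "cesaro_mean (\<lambda>k. x k + y k) m n = cesaro_mean x m n + cesaro_mean y m n"
  by (simp add: cesaro_mean_def sum.distrib scaleR_add_right)

lemma cesaro_mean_scaleR: "cesaro_mean (\<lambda>k. c *\<^sub>R x k) m n = c *\<^sub>R cesaro_mean x m n"
  by (simp add: cesaro_mean_def scaleR_sum_right[symmetric])

lemma cesaro_mean_uminus: "cesaro_mean (\<lambda>k. - x k) m n = - cesaro_mean x m n"
  by (simp add: cesaro_mean_def sum_negf)

lemma cesaro_mean_diff_const: "cesaro_mean (\<lambda>k. x k - c) m n = cesaro_mean x m n - c"
  by (simp add: cesaro_mean_def sum_subtractf scaleR_diff_right sum_constant_scaleR add.commute)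

lemma cesaro_mean_mono:
  fixes x y :: "nat \<Rightarrow> 'a::{real_normed_vector, ordered_real_vector}"
  assumes "\<And>k. x k \<le> y k"
  shows "cesaro_mean x m n \<le> cesaro_mean y m n"
  unfolding cesaro_mean_def by (rule scaleR_left_mono) (auto intro: sum_mono assms)

lemma almost_converges_to_add:
  assumes "almost_converges_to x L" "almost_converges_to y K"
  shows "almost_converges_to (\<lambda>k. x k + y k) (L + K)"
  using assms unfolding almost_converges_to_iff_uniform_limit cesaro_mean_add[abs_def]
  by (rule uniform_limit_add)

lemma almost_converges_to_scaleR:
  assumes "almost_converges_to x L"
  shows "almost_converges_to (\<lambda>k. c *\<^sub>R x k) (c *\<^sub>R L)"
  using assms unfolding almost_converges_to_iff_uniform_limit cesaro_mean_scaleR[abs_def]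
  by (rule bounded_linear.uniform_limit[OF bounded_linear_scaleR_right])

lemma almost_converges_to_iff_diff_zero:
  "almost_converges_to x L \<longleftrightarrow> almost_converges_to (\<lambda>k. x k - L) 0"
  by (simp add: almost_converges_to_def cesaro_mean_diff_const[unfolded cesaro_mean_def])

lemma norm_le_norm_if_neg_le_le:
  fixes a b :: "'a::banach_lattice"
  assumes "- a \<le> b" "b \<le> a"
  shows "norm b \<le> norm a"
proof (rule lattice_norm)
  have "sup b (- b) \<le> a"
    using assms by (simp add: minus_le_iff)
  also have "a \<le> sup a (- a)" by simp
  finally show "sup b (- b) \<le> sup a (- a)" .
qed

lemma almost_converges_to_zero_squeeze:
  fixes u v :: "nat \<Rightarrow> 'a::banach_lattice"
  assumes "\<And>k. - u k \<le> v k" "\<And>k. v k \<le> u k"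
    and "almost_converges_to u 0"
  shows "almost_converges_to v 0"
proof -
  have "norm (cesaro_mean v m n) \<le> norm (cesaro_mean u m n)" for m n
  proof (rule norm_le_norm_if_neg_le_le)
    show "- cesaro_mean u m n \<le> cesaro_mean v m n"
      using cesaro_mean_mono[of "\<lambda>k. - u k" v] assms(1) by (simp add: cesaro_mean_uminus)
    show "cesaro_mean v m n \<le> cesaro_mean u m n"
      using cesaro_mean_mono assms(2) .
  qed
  then have "\<forall>\<^sub>F m in sequentially. \<forall>n\<in>UNIV. norm (cesaro_mean v m n) \<le> norm (cesaro_mean u m n)"
    by simp
  moreover have "uniform_limit UNIV (\<lambda>m n. norm (cesaro_mean u m n)) (\<lambda>_. 0) sequentially"
    using uniform_limit_norm[OF assms(3)[unfolded almost_converges_to_iff_uniform_limit]] by simp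
  ultimately show ?thesis
    unfolding almost_converges_to_iff_uniform_limit by (rule uniform_limit_null_comparison)
qed

theorem theorem3p6:
  shows "almost_summability_preserves_order_inequalities TYPE('a::banach_lattice)"
  unfolding almost_summability_preserves_order_inequalities_def
proof (intro allI impI, elim conjE)
  fix ws xs ys zs :: "nat \<Rightarrow> 'a" and w x y z :: 'a and C :: real
  define u where "u k = C *\<^sub>R ((xs k - x) + (ys k - y) + (zs k - z))" for k
  assume "\<forall>k. - (C *\<^sub>R ((xs k - x) + (ys k - y) + (zs k - z))) < ws k - w \<and>
      ws k - w < C *\<^sub>R ((xs k - x) + (ys k - y) + (zs k - z))"
  then have bounds: "- u k \<le> ws k - w" "ws k - w \<le> u k" for k
    by (auto simp: u_def less_imp_le)
  assume "almost_converges_to xs x" "almost_converges_to ys y" "almost_converges_to zs z"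
  then have "almost_converges_to u (C *\<^sub>R (0 + 0 + 0))"
    unfolding u_def almost_converges_to_iff_diff_zero[of _ x] almost_converges_to_iff_diff_zero[of _ y]
      almost_converges_to_iff_diff_zero[of _ z]
    by (intro almost_converges_to_scaleR almost_converges_to_add)
  then have "almost_converges_to (\<lambda>k. ws k - w) 0"
    by (intro almost_converges_to_zero_squeeze[OF bounds]) simp
  then show "almost_converges_to ws w"
    by (subst almost_converges_to_iff_diff_zero)
qed

end
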